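(* Fix a constant $c\ge1$. There is a constant $c'>0$ depending only on $c$ such that the following holds for all integers $n\ge3$ and $U\ge3$ with $n/c\le U\le cn$. Run the modified chain started at state $a$ at time $1$, and consider its $4n-1$ transitions at times $1,\dots,4n-1$. For a state $j$, let $T(a,j)$ be the event that during these transitions (1) no major self-loop is taken at any of the states $1,1',n,n'$, and (2) exactly one switching link is taken, and it is taken at state $j$. Let $L_k$ be the event that exactly $k$ major self-loops (at any states) are taken during these transitions. Then for all states $a,j$ and all integers $0\le k\le 2n-2$, $$\mathbb{P}\big(T(a,j)\mid L_k\big)\ge\frac{1}{c'n}.$$
   Context: Let $n\ge3$, $U\ge3$ be integers. The "modified chain" is a Markov chain on the $2n$ states $\{1,\dots,n,1',\dots,n'\}$ whose transitions are labeled edges (a multigraph; two distinct edges may join the same pair of states). Every state has exactly three outgoing edges: a "major self-loop" (back to itself) with probability $1/2$, a "continuing link" with probability $\frac12(1-\frac1U)$, and a "switching link" with probability $\frac1{2U}$. Continuing links: $i\to i+1$ for $1\le i\le n-1$, $n\to n'$, $i'\to(i-1)'$ for $2\le i\le n$, $1'\to1$. Switching links: $i\to(i+1)'$ for $1\le i\le n-1$, $n\to n$, $i'\to i-1$ for $2\le i\le n$, $1'\to1'$ (so at $n$ and $1'$ the switching link is a self-loop distinct from the major self-loop). (This chain is obtained from the original chain—in which states $2,\dots,n-1,2',\dots,(n-1)'$ have these same three transitions, while states $1,1',n,n'$ have no major self-loop and have continuing and switching probabilities $1-\frac1U$ and $\frac1U$—by adding a major self-loop of probability $1/2$ at $1,1',n,n'$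 and halving their other transition probabilities.) *)

theory Defs
  imports Complex_Main
begin

text \<open>States of the modified chain: (i, False) is state i, (i, True) is state i',
  for 1 <= i <= n.\<close>
type_synonym mstate = "nat \<times> bool"

definition mstates :: "nat \<Rightarrow> mstate set" where
  "mstates n = {(i, b). 1 \<le> i \<and> i \<le> n}"

datatype medge = Major | Cont | Switch

fun mstep :: "nat \<Rightarrow> mstate \<Rightarrow> medge \<Rightarrow> mstate" where
  "mstep n s Major = s"
| "mstep n (i, False) Cont = (if i < n then (i + 1, False) else (n, True))"
| "mstep n (i, True) Cont = (if 2 \<le> i then (i - 1, True) else (1, False))"
| "mstep n (i, False) Switch = (if i < n then (i + 1, True) else (n, False))"
| "mstep n (i, True) Switch = (if 2 \<le> i then (i - 1, False) else (1, True))"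

definition medge_prob :: "nat \<Rightarrow> medge \<Rightarrow> real" where
  "medge_prob U e = (case e of Major \<Rightarrow> 1/2
                              | Cont \<Rightarrow> (1 - 1 / real U) / 2
                              | Switch \<Rightarrow> 1 / (2 * real U))"

fun mrun :: "nat \<Rightarrow> mstate \<Rightarrow> medge list \<Rightarrow> mstate list" where
  "mrun n s [] = []"
| "mrun n s (e # es) = s # mrun n (mstep n s e) es"

definition mtrans :: "nat \<Rightarrow> mstate \<Rightarrow> medge list \<Rightarrow> (mstate \<times> medge) list" where
  "mtrans n s es = zip (mrun n s es) es"

definition mweight :: "nat \<Rightarrow> medge list \<Rightarrow> real" where
  "mweight U es = prod_list (map (medge_prob U) es)"

text \<open>Probability that the chain, run for m transitions, has edge sequence in
  the event E (events are sets of edge sequences, the start state being fixed).\<close>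
definition mprob :: "nat \<Rightarrow> nat \<Rightarrow> (medge list \<Rightarrow> bool) \<Rightarrow> real" where
  "mprob U m E = (\<Sum>es\<in>{es. length es = m \<and> E es}. mweight U es)"

definition mcond_prob :: "nat \<Rightarrow> nat \<Rightarrow> (medge list \<Rightarrow> bool) \<Rightarrow> (medge list \<Rightarrow> bool) \<Rightarrow> real" where
  "mcond_prob U m A B = mprob U m (\<lambda>es. A es \<and> B es) / mprob U m B"

definition eventT :: "nat \<Rightarrow> mstate \<Rightarrow> mstate \<Rightarrow> medge list \<Rightarrow> bool" where
  "eventT n a j es =
     ((\<forall>(s, e) \<in> set (mtrans n a es).
         e = Major \<longrightarrow> s \<notin> {(1, False), (1, True), (n, False), (n, True)})
      \<and> filter (\<lambda>(s, e). e = Switch) (mtrans n a es) = [(j, Switch)])"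

definition eventL :: "nat \<Rightarrow> medge list \<Rightarrow> bool" where
  "eventL k es = (length (filter (\<lambda>e. e = Major) es) = k)"

end

theory Submission
  imports Defs
begin

text \<open>
  Every step is a major self-loop with probability 1/2 independently, so P(L_k) is
  binomial: C(4n-1, k) / 2^(4n-1).  For the joint event we fix a skeleton run without
  self-loops: p < 2n continuing links from a to j, the switching link at j, and q further
  continuing links, p + q + 2 = 4n - k.  Inserting the k major self-loops at the slot
  states of the skeleton that are not among 1, 1', n, n' gives distinct runs in
  T(a,j) \<inter> L_k, each of probability 2^(-k) times that of the skeleton.  Since the
  continuing links go round a cycle of length 2n, the skeleton has at most 12 bad slots
  and roughly a third of its slots are good; by stars and bars the number of placements
  is then at least 4^(-12) C(4n-1, k).  The skeleton has probability
  (1 - 1/U)^(p+q) / (2^(p+q+1) U) \<ge> exp(-8n/U) / (2^(p+q+1) U), and n/U \<le> c.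
\<close>

subsection \<open>Probabilities of events on edge sequences\<close>

lemma UNIV_medge: "(UNIV :: medge set) = {Major, Cont, Switch}"
  using medge.exhaust by auto

lemma finite_edge_seqs: "finite {es :: medge list. length es = m \<and> E es}"
proof (rule finite_subset)
  show "finite {es :: medge list. set es \<subseteq> UNIV \<and> length es = m}"
    by (rule finite_lists_length_eq) (simp add: UNIV_medge)
qed auto

lemma sum_edge_seqs_Suc:
  "(\<Sum>es\<in>{es :: medge list. length es = Suc m \<and> E es}. f es) =
   (\<Sum>e\<in>UNIV. \<Sum>es\<in>{es. length es = m \<and> E (e # es)}. f (e # es))"
proof -
  let ?S = "SIGMA e:UNIV. {es :: medge list. length es = m \<and> E (e # es)}"
  have image: "{es :: medge list. length es = Suc m \<and> E es} = (\<lambda>(e, es). e # es) ` ?S"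
    by (auto simp: length_Suc_conv image_iff)
  have inj: "inj_on (\<lambda>(e, es). e # es) ?S"
    by (auto simp: inj_on_def)
  show ?thesis
    unfolding image sum.reindex[OF inj]
    by (subst sum.Sigma) (auto simp: finite_edge_seqs UNIV_medge split_def)
qed

lemma mweight_Cons: "mweight U (e # es) = medge_prob U e * mweight U es"
  by (simp add: mweight_def)

lemma mweight_nonneg: "U \<ge> 1 \<Longrightarrow> mweight U es \<ge> 0"
  unfolding mweight_def
  by (rule prod_list_nonneg) (auto simp: medge_prob_def split: medge.splits)

text \<open>Every step is a major self-loop with probability 1/2, independently, so the number
  of major self-loops among m steps is binomially distributed.\<close>
lemma prob_eventL: "mprob U m (eventL k) = real (m choose k) / 2 ^ m"
proof (induction m arbitrary: k)
  case 0
  have "{es :: medge list. length es = 0 \<and> eventL k es} = (if k = 0 then {[]} else {})"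
    by (auto simp: eventL_def)
  then show ?case by (simp add: mprob_def mweight_def)
next
  case (Suc m)
  have major: "medge_prob U Major = 1/2"
    by (simp add: medge_prob_def)
  have non_major: "medge_prob U Cont + medge_prob U Switch = 1/2"
    by (cases "U = 0") (simp_all add: medge_prob_def field_simps)
  have "mprob U (Suc m) (eventL k) =
     (\<Sum>e\<in>UNIV. medge_prob U e * (\<Sum>es\<in>{es. length es = m \<and> eventL k (e # es)}. mweight U es))"
    unfolding mprob_def sum_edge_seqs_Suc mweight_Cons by (simp add: sum_distrib_left)
  also have "\<dots> = medge_prob U Major * (if k = 0 then 0 else mprob U m (eventL (k - 1)))
      + (medge_prob U Cont + medge_prob U Switch) * mprob U m (eventL k)"
    by (cases k) (simp_all add: UNIV_medge eventL_def mprob_def algebra_simps)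
  also have "\<dots> = real (Suc m choose k) / 2 ^ Suc m"
    using Suc.IH[of k] Suc.IH[of "k - 1"] by (cases k) (simp_all add: major non_major field_simps)
  finally show ?case .
qed

definition final_state :: "nat \<Rightarrow> mstate \<Rightarrow> medge list \<Rightarrow> mstate" where
  "final_state n s es = foldl (mstep n) s es"

text \<open>The states in which the edges of es start, followed by the final state: the
  length(es)+1 slots at which major self-loops can be inserted into the run.\<close>
definition slot_states :: "nat \<Rightarrow> mstate \<Rightarrow> medge list \<Rightarrow> mstate list" where
  "slot_states n s es = mrun n s es @ [final_state n s es]"

lemma final_state_simps [simp]:
  "final_state n s [] = s"
  "final_state n s (e # es) = final_state n (mstep n s e) es"
  "final_state n s (es @ fs) = final_state n (final_state n s es) fs"
  by (simp_all add: final_state_def)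

lemma mrun_append: "mrun n s (es @ fs) = mrun n s es @ mrun n (final_state n s es) fs"
  by (induction es arbitrary: s) auto

lemma length_mrun [simp]: "length (mrun n s es) = length es"
  by (induction es arbitrary: s) auto

lemma slot_states_simps [simp]:
  "slot_states n s [] = [s]"
  "slot_states n s (e # es) = s # slot_states n (mstep n s e) es"
  "length (slot_states n s es) = Suc (length es)"
  by (simp_all add: slot_states_def)

lemma slot_states_append:
  "slot_states n s (es @ fs) = mrun n s es @ slot_states n (final_state n s es) fs"
  by (simp add: slot_states_def mrun_append)

lemma mtrans_simps [simp]:
  "mtrans n s [] = []"
  "mtrans n s (e # es) = (s, e) # mtrans n (mstep n s e) es"
  by (simp_all add: mtrans_def)

lemma mtrans_replicate_Major:
  "mtrans n s (replicate c Major @ es) = replicate c (s, Major) @ mtrans n s es"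
  by (induction c) auto

subsection \<open>Inserting major self-loops into a run\<close>

text \<open>insert_loops w cs inserts cs!t major self-loops at slot t of the skeleton w, i.e.
  just before the t-th edge of w (and, for the last slot, after all of them).\<close>
fun insert_loops :: "medge list \<Rightarrow> nat list \<Rightarrow> medge list" where
  "insert_loops w [] = []"
| "insert_loops [] (c # cs) = replicate c Major"
| "insert_loops (x # w) (c # cs) = replicate c Major @ x # insert_loops w cs"

lemma length_insert_loops:
  "length cs = Suc (length w) \<Longrightarrow> length (insert_loops w cs) = length w + sum_list cs"
  by (induction w cs rule: insert_loops.induct) auto

lemma count_Major_insert_loops:
  "length cs = Suc (length w) \<Longrightarrow> Major \<notin> set w \<Longrightarrow>
   length (filter (\<lambda>e. e = Major) (insert_loops w cs)) = sum_list cs"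
  by (induction w cs rule: insert_loops.induct) auto

lemma mweight_insert_loops:
  "length cs = Suc (length w) \<Longrightarrow> mweight U (insert_loops w cs) = (1/2) ^ sum_list cs * mweight U w"
  by (induction w cs rule: insert_loops.induct) (auto simp: mweight_def medge_prob_def power_add)

text \<open>Self-loops do not move the chain, so the switching transitions are unchanged.\<close>
lemma switches_insert_loops:
  "length cs = Suc (length w) \<Longrightarrow>
   filter (\<lambda>(s, e). e = Switch) (mtrans n s (insert_loops w cs)) =
   filter (\<lambda>(s, e). e = Switch) (mtrans n s w)"
proof (induction w cs arbitrary: s rule: insert_loops.induct)
  case (2 c cs)
  then show ?case by (induction c) auto
next
  case (3 x w c cs)
  then show ?case by (simp add: mtrans_replicate_Major)
qed auto

lemma Major_insert_loops:
  assumes "length cs = Suc (length w)" and "Major \<notin> set w"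
    and "(st, Major) \<in> set (mtrans n s (insert_loops w cs))"
  shows "\<exists>t < length cs. 0 < cs ! t \<and> st = slot_states n s w ! t"
  using assms
proof (induction w cs arbitrary: s rule: insert_loops.induct)
  case (2 c cs)
  then have "st = s \<and> 0 < c"
    using mtrans_replicate_Major[of n s c "[]"] by (cases c) auto
  then show ?case by (intro exI[of _ 0]) auto
next
  case (3 x w c cs)
  then consider "(st, Major) \<in> set (replicate c (s, Major))"
    | "(st, Major) \<in> set (mtrans n (mstep n s x) (insert_loops w cs))"
    by (auto simp: mtrans_replicate_Major)
  then show ?case
  proof cases
    case 1
    then show ?thesis by (intro exI[of _ 0]) auto
  next
    case 2
    with "3.IH"[of "mstep n s x"] "3.prems" obtain t where
      "t < length cs" "0 < cs ! t" "st = slot_states n (mstep n s x) w ! t"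
      by auto
    then show ?thesis by (intro exI[of _ "Suc t"]) auto
  qed
qed auto

lemma replicate_Major_Cons_eq:
  assumes "x \<noteq> Major" "x' \<noteq> Major"
    and "replicate c Major @ x # r = replicate c' Major @ x' # r'"
  shows "c = c' \<and> x = x' \<and> r = r'"
  using assms
proof (induction c arbitrary: c')
  case 0
  then show ?case by (cases c') auto
next
  case (Suc c)
  then show ?case by (cases c') auto
qed

lemma inj_insert_loops:
  assumes "Major \<notin> set w"
  shows "inj_on (insert_loops w) {cs. length cs = Suc (length w)}"
proof -
  have "cs = cs'" if "length cs = Suc (length w)" "length cs' = Suc (length w)"
    "insert_loops w cs = insert_loops w cs'" for cs cs'
    using that assms
  proof (induction w cs arbitrary: cs' rule: insert_loops.induct)
    case (2 c cs)
    then show ?case by (cases cs') auto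
  next
    case (3 x w c cs)
    then obtain c' cs'' where cs': "cs' = c' # cs''"
      by (cases cs') auto
    with 3 have "c = c' \<and> insert_loops w cs = insert_loops w cs''"
      using replicate_Major_Cons_eq[of x x c "insert_loops w cs" c' "insert_loops w cs''"] by auto
    with 3 cs' show ?case by auto
  qed auto
  then show ?thesis by (auto intro: inj_onI)
qed

subsection \<open>Compositions with prescribed support\<close>

definition compositions :: "bool list \<Rightarrow> nat \<Rightarrow> nat list set" where
  "compositions bs k =
     {cs. length cs = length bs \<and> sum_list cs = k \<and> list_all2 (\<lambda>c b. 0 < c \<longrightarrow> b) cs bs}"

lemma finite_compositions: "finite (compositions bs k)"
proof (rule finite_subset)
  show "compositions bs k \<subseteq> {cs. set cs \<subseteq> {..k} \<and> length cs = length bs}"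
    by (auto simp: compositions_def dest: member_le_sum_list)
qed (simp add: finite_lists_length_eq)

lemma compositions_Nil: "compositions [] k = (if k = 0 then {[]} else {})"
  by (auto simp: compositions_def)

lemma compositions_False: "compositions (False # bs) k = Cons 0 ` compositions bs k"
  by (auto simp: compositions_def list_all2_Cons2 image_iff)

lemma compositions_True:
  "compositions (True # bs) k = (\<Union>c\<in>{..k}. Cons c ` compositions bs (k - c))"
  by (auto simp: compositions_def list_all2_Cons2 image_iff)

lemma card_compositions:
  assumes "A = length (filter (\<lambda>b. b) bs)" and "1 \<le> A"
  shows "card (compositions bs k) = (k + A - 1) choose k"
  using assms
proof (induction bs arbitrary: k A)
  case Nil
  then show ?case by simp
next
  case (Cons b bs)
  show ?case
  proof (cases b)
    case False
    with Cons show ?thesis by (simp add: compositions_False card_image)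
  next
    case True
    define A' where "A' = length (filter (\<lambda>b. b) bs)"
    have "card (compositions (True # bs) k) = (\<Sum>c\<le>k. card (compositions bs (k - c)))"
      unfolding compositions_True
      by (subst card_UN_disjoint) (auto simp: finite_compositions card_image)
    also have "\<dots> = (\<Sum>i\<le>k. card (compositions bs i))"
      by (rule sum.reindex_bij_witness[where i="\<lambda>i. k - i" and j="\<lambda>i. k - i"]) auto
    also have "\<dots> = (k + A') choose k"
    proof (cases "A' = 0")
      case True
      then have "\<not> (\<exists>b\<in>set bs. b)"
        by (auto simp: A'_def filter_empty_conv)
      then have "compositions bs i = (if i = 0 then {replicate (length bs) 0} else {})" for i
        by (induction bs arbitrary: i) (auto simp: compositions_Nil compositions_False)
      then have "card (compositions bs i) = (if i = 0 then 1 else 0)" for i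
        by simp
      with True show ?thesis by (simp add: sum.delta)
    next
      case False
      then have "(\<Sum>i\<le>k. card (compositions bs i)) = (\<Sum>i\<le>k. (A' - 1 + i) choose i)"
        using Cons.IH[OF A'_def] by (simp add: add.commute)
      also have "\<dots> = Suc (A' - 1 + k) choose k"
        by (rule sum_choose_lower)
      finally show ?thesis using False by (simp add: add.commute)
    qed
    finally show ?thesis using True Cons.prems by (simp add: A'_def)
  qed
qed

lemma choose_add_le:
  assumes "1 \<le> A" and "k \<le> 3 * A"
  shows "(k + A - 1 + d) choose k \<le> 4 ^ d * ((k + A - 1) choose k)"
proof (induction d)
  case 0
  then show ?case by simp
next
  case (Suc d)
  define M where "M = A + d"
  have M: "1 \<le> M" "k + M \<le> 4 * M" "k + M - 1 = k + A - 1 + d"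
    using assms by (auto simp: M_def)
  have "M * ((k + M) choose k) = (k + M) * ((k + M - 1) choose k)"
    using binomial_absorb_comp[of "k + M" k] M by (simp add: mult.commute)
  also have "\<dots> \<le> (4 * M) * ((k + M - 1) choose k)"
    using M by (intro mult_right_mono) auto
  also have "\<dots> \<le> (4 * M) * (4 ^ d * ((k + A - 1) choose k))"
    using Suc.IH M by (intro mult_left_mono) auto
  finally have "(k + M) choose k \<le> 4 ^ Suc d * ((k + A - 1) choose k)"
    using M by (simp add: algebra_simps)
  moreover have "k + A - 1 + Suc d = k + M"
    using assms by (simp add: M_def)
  ultimately show ?case by simp
qed

lemma card_compositions_lower_bound:
  assumes G: "G = length (filter (\<lambda>b. b) bs)" and G1: "1 \<le> G" and kG: "k \<le> 3 * G"
    and few_forbidden: "length bs \<le> G + 12"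
  shows "(length bs + k - 1) choose k \<le> 4 ^ 12 * card (compositions bs k)"
proof -
  have "G \<le> length bs"
    using G length_filter_le by metis
  then have "length bs + k - 1 = k + G - 1 + (length bs - G)"
    using G1 by linarith
  then have "(length bs + k - 1) choose k \<le> 4 ^ (length bs - G) * ((k + G - 1) choose k)"
    using choose_add_le[OF G1 kG] by simp
  also have "\<dots> \<le> 4 ^ 12 * card (compositions bs k)"
    unfolding card_compositions[OF G G1] using few_forbidden
    by (intro mult_right_mono power_increasing) auto
  finally show ?thesis .
qed

subsection \<open>The continuing links form a cycle\<close>

text \<open>Continuing links run around the cycle 1, 2, ..., n, n', ..., 1', 1 of length 2n;
  cycle_pos is the position of a state on it.\<close>
definition cycle_pos :: "nat \<Rightarrow> mstate \<Rightarrow> nat" where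
  "cycle_pos n x = (if snd x then 2 * n - fst x else fst x - 1)"

definition bad_states :: "nat \<Rightarrow> mstate set" where
  "bad_states n = {(1, False), (1, True), (n, False), (n, True)}"

definition cont_walk :: "nat \<Rightarrow> mstate \<Rightarrow> nat \<Rightarrow> mstate" where
  "cont_walk n x t = final_state n x (replicate t Cont)"

lemma cycle_pos_lt: "x \<in> mstates n \<Longrightarrow> cycle_pos n x < 2 * n"
  by (auto simp: mstates_def cycle_pos_def)

lemma inj_on_cycle_pos: "inj_on (cycle_pos n) (mstates n)"
  by (auto simp: inj_on_def mstates_def cycle_pos_def split: if_splits)

lemma mstep_Cont:
  assumes "x \<in> mstates n"
  shows "mstep n x Cont \<in> mstates n \<and> cycle_pos n (mstep n x Cont) = Suc (cycle_pos n x) mod (2 * n)"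
proof -
  obtain i b where x: "x = (i, b)"
    by (cases x)
  with assms show ?thesis
    by (cases b; cases "i = 1") (auto simp: mstates_def cycle_pos_def)
qed

lemma mstep_Switch: "x \<in> mstates n \<Longrightarrow> mstep n x Switch \<in> mstates n"
  by (cases x; cases "snd x") (auto simp: mstates_def)

lemma cont_walk_0: "cont_walk n x 0 = x"
  by (simp add: cont_walk_def)

lemma cont_walk_Suc_left: "cont_walk n x (Suc t) = cont_walk n (mstep n x Cont) t"
  by (simp add: cont_walk_def)

lemma cont_walk_add: "cont_walk n x (s + t) = cont_walk n (cont_walk n x s) t"
  by (simp add: cont_walk_def replicate_add)

lemma cont_walk_cycle_pos:
  assumes "x \<in> mstates n"
  shows "cont_walk n x t \<in> mstates n \<and> cycle_pos n (cont_walk n x t) = (cycle_pos n x + t) mod (2 * n)"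
proof (induction t)
  case 0
  then show ?case using assms cycle_pos_lt by (simp add: cont_walk_def)
next
  case (Suc t)
  then show ?case
    using mstep_Cont[of "cont_walk n x t" n] cont_walk_add[of n x t 1]
    by (simp add: cont_walk_def mod_Suc_eq)
qed

lemma cont_walk_reaches:
  assumes a: "a \<in> mstates n" and j: "j \<in> mstates n"
  shows "\<exists>p < 2 * n. cont_walk n a p = j"
proof -
  define p where "p = (cycle_pos n j + 2 * n - cycle_pos n a) mod (2 * n)"
  have pos: "cycle_pos n a < 2 * n" "cycle_pos n j < 2 * n"
    using cycle_pos_lt a j by auto
  have "cycle_pos n (cont_walk n a p) = (cycle_pos n a + p) mod (2 * n)"
    using cont_walk_cycle_pos[OF a] by blast
  also have "\<dots> = (cycle_pos n j + 2 * n) mod (2 * n)"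
    using pos by (simp add: p_def mod_add_right_eq)
  also have "\<dots> = cycle_pos n j"
    using pos by simp
  finally have "cont_walk n a p = j"
    using cont_walk_cycle_pos[OF a, of p] j inj_on_cycle_pos by (auto dest: inj_onD)
  moreover have "p < 2 * n"
    using pos by (simp add: p_def)
  ultimately show ?thesis by blast
qed

lemma mrun_replicate_Cont: "mrun n x (replicate t Cont) = map (cont_walk n x) [0..<t]"
proof (induction t arbitrary: x)
  case 0
  then show ?case by simp
next
  case (Suc t)
  then show ?case
    by (simp add: upt_conv_Cons map_Suc_upt[symmetric] comp_def cont_walk_Suc_left del: upt_Suc)
      (simp add: cont_walk_def)
qed

lemma slot_states_replicate_Cont:
  "slot_states n x (replicate t Cont) = map (cont_walk n x) [0..<Suc t]"
  by (simp add: slot_states_def mrun_replicate_Cont cont_walk_def)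

lemma card_periodic_hits:
  fixes x m d L :: nat and B :: "nat set"
  assumes "finite B" and "0 < m" and "L \<le> d * m"
  shows "card {t. t < L \<and> (x + t) mod m \<in> B} \<le> d * card B"
proof -
  let ?f = "\<lambda>t. ((x + t) mod m, t div m)"
  have "inj ?f"
  proof (rule injI)
    fix s t
    assume "?f s = ?f t"
    then have "s mod m = t mod m" "s div m = t div m"
      by (auto simp: nat_mod_eq_iff)
    then show "s = t"
      by (metis div_mult_mod_eq)
  qed
  then have "card {t. t < L \<and> (x + t) mod m \<in> B} = card (?f ` {t. t < L \<and> (x + t) mod m \<in> B})"
    by (simp add: card_image inj_on_subset)
  also have "\<dots> \<le> card (B \<times> {..<d})"
    using assms by (intro card_mono) (auto intro: less_mult_imp_div_less)
  also have "\<dots> = d * card B"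
    by (simp add: card_cartesian_product)
  finally show ?thesis .
qed

lemma card_bad_states: "card (bad_states n) \<le> 4"
proof -
  have "bad_states n = set [(1, False), (1, True), (n, False), (n, True)]"
    by (simp add: bad_states_def)
  then show ?thesis
    using card_length[of "[(1, False), (1, True), (n, False), (n, True)]"] by simp
qed

lemma bad_visits:
  assumes x: "x \<in> mstates n" and L: "L \<le> d * (2 * n)"
  shows "card {t. t < L \<and> cont_walk n x t \<in> bad_states n} \<le> 4 * d"
proof -
  let ?B = "cycle_pos n ` bad_states n"
  have "0 < 2 * n"
    using x by (auto simp: mstates_def)
  have "card {t. t < L \<and> cont_walk n x t \<in> bad_states n}
      \<le> card {t. t < L \<and> (cycle_pos n x + t) mod (2 * n) \<in> ?B}"
  proof (intro card_mono subsetI)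
    fix t
    assume "t \<in> {t. t < L \<and> cont_walk n x t \<in> bad_states n}"
    then show "t \<in> {t. t < L \<and> (cycle_pos n x + t) mod (2 * n) \<in> ?B}"
      using cont_walk_cycle_pos[OF x, of t] by (auto intro: image_eqI[where x = "cont_walk n x t"])
  qed auto
  also have "\<dots> \<le> d * card ?B"
    by (rule card_periodic_hits) (use \<open>0 < 2 * n\<close> L in \<open>auto simp: bad_states_def\<close>)
  also have "\<dots> \<le> d * 4"
  proof -
    have "finite (bad_states n)"
      by (simp add: bad_states_def)
    then have "card ?B \<le> 4"
      using card_image_le card_bad_states order_trans by blast
    then show ?thesis by simp
  qed
  finally show ?thesis by simp
qed

lemma good_within_three:
  assumes x: "x \<in> mstates n" and n: "3 \<le> n"
  shows "\<exists>d < 3. cont_walk n x d \<notin> bad_states n"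
proof (cases "x \<in> bad_states n")
  case False
  then show ?thesis by (intro exI[of _ 0]) (simp add: cont_walk_0)
next
  case True
  note walk = cont_walk_0 cont_walk_Suc_left numeral_2_eq_2
  from True consider "x = (1, False)" | "x = (1, True)" | "x = (n, False)" | "x = (n, True)"
    by (auto simp: bad_states_def)
  then show ?thesis
  proof cases
    case 1
    with n show ?thesis by (intro exI[of _ 1]) (auto simp: walk bad_states_def)
  next
    case 2
    with n show ?thesis by (intro exI[of _ 2]) (auto simp: walk bad_states_def)
  next
    case 3
    with n show ?thesis by (intro exI[of _ 2]) (auto simp: walk bad_states_def)
  next
    case 4
    with n show ?thesis by (intro exI[of _ 1]) (auto simp: walk bad_states_def)
  qed
qed

lemma good_visits:
  assumes x: "x \<in> mstates n" and n: "3 \<le> n"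
  shows "L div 3 \<le> card {t. t < L \<and> cont_walk n x t \<notin> bad_states n}"
proof -
  let ?G = "\<lambda>L. {t. t < L \<and> cont_walk n x t \<notin> bad_states n}"
  have "i \<le> card (?G (3 * i))" for i
  proof (induction i)
    case 0
    then show ?case by simp
  next
    case (Suc i)
    obtain d where d: "d < 3" "cont_walk n (cont_walk n x (3 * i)) d \<notin> bad_states n"
      using good_within_three[OF _ n] cont_walk_cycle_pos[OF x] by blast
    then have "insert (3 * i + d) (?G (3 * i)) \<subseteq> ?G (3 * Suc i)"
      by (auto simp: cont_walk_add)
    then have "card (insert (3 * i + d) (?G (3 * i))) \<le> card (?G (3 * Suc i))"
      by (intro card_mono) auto
    then show ?case
      using Suc.IH by simp
  qed
  then have "L div 3 \<le> card (?G (3 * (L div 3)))" .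
  also have "\<dots> \<le> card (?G L)"
    by (intro card_mono) auto
  finally show ?thesis .
qed

subsection \<open>Lower bound for the joint probability\<close>

lemma joint_prob_lower_bound:
  fixes n :: nat and w :: "medge list" and a j :: mstate
  defines "bs \<equiv> map (\<lambda>x. x \<notin> bad_states n) (slot_states n a w)"
  assumes no_loops: "Major \<notin> set w"
    and switches: "filter (\<lambda>(s, e). e = Switch) (mtrans n a w) = [(j, Switch)]"
    and U: "1 \<le> U"
  shows "real (card (compositions bs k)) * ((1/2) ^ k * mweight U w)
           \<le> mprob U (length w + k) (\<lambda>es. eventT n a j es \<and> eventL k es)"
proof -
  let ?E = "{es. length es = length w + k \<and> eventT n a j es \<and> eventL k es}"
  have in_event: "insert_loops w cs \<in> ?E" if cs: "cs \<in> compositions bs k" for cs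
  proof -
    have len: "length cs = Suc (length w)" and sum: "sum_list cs = k"
      and support: "list_all2 (\<lambda>c b. 0 < c \<longrightarrow> b) cs bs"
      using cs by (auto simp: compositions_def bs_def)
    have good_loops: "s \<notin> bad_states n"
      if loop: "(s, Major) \<in> set (mtrans n a (insert_loops w cs))" for s
    proof -
      obtain t where t: "t < length cs" "0 < cs ! t" "s = slot_states n a w ! t"
        using Major_insert_loops[OF len no_loops loop] by blast
      with support have "bs ! t"
        using list_all2_nthD by blast
      with t len show ?thesis by (simp add: bs_def)
    qed
    have "eventT n a j (insert_loops w cs)"
      unfolding eventT_def switches_insert_loops[OF len] switches
      using good_loops by (auto simp: bad_states_def)
    moreover have "eventL k (insert_loops w cs)"
      using count_Major_insert_loops[OF len no_loops] sum by (simp add: eventL_def)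
    ultimately show ?thesis
      using length_insert_loops[OF len] sum by simp
  qed
  have inj: "inj_on (insert_loops w) (compositions bs k)"
    by (rule inj_on_subset[OF inj_insert_loops[OF no_loops]]) (auto simp: compositions_def bs_def)
  have "real (card (compositions bs k)) * ((1/2) ^ k * mweight U w)
      = (\<Sum>cs\<in>compositions bs k. mweight U (insert_loops w cs))"
    by (simp add: mweight_insert_loops compositions_def bs_def)
  also have "\<dots> = (\<Sum>es\<in>insert_loops w ` compositions bs k. mweight U es)"
    by (simp add: sum.reindex[OF inj])
  also have "\<dots> \<le> (\<Sum>es\<in>?E. mweight U es)"
    using in_event finite_edge_seqs mweight_nonneg[OF U] by (intro sum_mono2) auto
  finally show ?thesis by (simp add: mprob_def)
qed

definition skeleton :: "nat \<Rightarrow> nat \<Rightarrow> medge list" where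
  "skeleton p q = replicate p Cont @ Switch # replicate q Cont"

lemma switches_replicate_Cont:
  "filter (\<lambda>(s, e). e = Switch) (mtrans n s (replicate p Cont @ r)) =
   filter (\<lambda>(s, e). e = Switch) (mtrans n (cont_walk n s p) r)"
  by (induction p arbitrary: s) (simp_all add: cont_walk_0 cont_walk_Suc_left)

lemma switches_skeleton:
  "cont_walk n a p = j \<Longrightarrow> filter (\<lambda>(s, e). e = Switch) (mtrans n a (skeleton p q)) = [(j, Switch)]"
  using switches_replicate_Cont[of n "mstep n j Switch" q "[]"]
  by (simp add: skeleton_def switches_replicate_Cont)

lemma slot_states_skeleton:
  "cont_walk n a p = j \<Longrightarrow>
   slot_states n a (skeleton p q) =
     map (cont_walk n a) [0..<Suc p] @ map (cont_walk n (mstep n j Switch)) [0..<Suc q]"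
  by (simp add: skeleton_def slot_states_append mrun_replicate_Cont slot_states_replicate_Cont)
    (simp add: cont_walk_def)

lemma length_filter_map_upt: "length (filter P (map f [0..<L])) = card {t. t < L \<and> P (f t)}"
  by (simp add: length_filter_conv_card) (intro arg_cong[where f = card]; auto)

text \<open>Along the skeleton at most 12 slot states are bad (at most 4 while walking once
  round the cycle to j, at most 8 during the remaining walk), and at least a third of the
  slot states of each of the two walks are good.\<close>
lemma good_slots_skeleton:
  assumes n: "3 \<le> n" and a: "a \<in> mstates n" and b: "b \<in> mstates n"
    and p: "p < 2 * n" and q: "q < 4 * n"
  defines "G \<equiv> length (filter (\<lambda>x. x \<notin> bad_states n)
                  (map (cont_walk n a) [0..<Suc p] @ map (cont_walk n b) [0..<Suc q]))"
  shows "p + q + 2 \<le> 3 * G + 4" and "p + q + 2 \<le> G + 12"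
proof -
  define good where "good x L = card {t. t < L \<and> cont_walk n x t \<notin> bad_states n}" for x L
  define bad where "bad x L = card {t. t < L \<and> cont_walk n x t \<in> bad_states n}" for x L
  have split: "good x L + bad x L = L" for x L
  proof -
    have "{t. t < L \<and> cont_walk n x t \<notin> bad_states n} \<union> {t. t < L \<and> cont_walk n x t \<in> bad_states n}
        = {..<L}"
      by auto
    then show ?thesis
      unfolding good_def bad_def by (subst card_Un_disjoint[symmetric]) auto
  qed
  have G: "G = good a (Suc p) + good b (Suc q)"
    by (simp only: G_def filter_append length_append length_filter_map_upt good_def)
  have "bad a (Suc p) \<le> 4 * 1" "bad b (Suc q) \<le> 4 * 2"
    unfolding bad_def using p q by (intro bad_visits a b; simp)+
  moreover have "Suc p div 3 \<le> good a (Suc p)" "Suc q div 3 \<le> good b (Suc q)"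
    unfolding good_def using n by (intro good_visits a b; simp)+
  moreover have "Suc p \<le> 3 * (Suc p div 3) + 2" "Suc q \<le> 3 * (Suc q div 3) + 2"
    by simp_all
  ultimately show "p + q + 2 \<le> 3 * G + 4" "p + q + 2 \<le> G + 12"
    using split[of a "Suc p"] split[of b "Suc q"] unfolding G by simp_all
qed

lemma placements_skeleton:
  assumes n: "3 \<le> n" and a: "a \<in> mstates n" and j: "j \<in> mstates n" and k: "k \<le> 2 * n - 2"
    and p: "p < 2 * n" "cont_walk n a p = j" and pq: "p + q + 2 = 4 * n - k"
  shows "4 * n - 1 choose k
    \<le> 4 ^ 12 * card (compositions (map (\<lambda>x. x \<notin> bad_states n) (slot_states n a (skeleton p q))) k)"
proof -
  define bs where "bs = map (\<lambda>x. x \<notin> bad_states n) (slot_states n a (skeleton p q))"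
  define G where "G = length (filter (\<lambda>b. b) bs)"
  have G_eq: "G = length (filter (\<lambda>x. x \<notin> bad_states n)
      (map (cont_walk n a) [0..<Suc p] @ map (cont_walk n (mstep n j Switch)) [0..<Suc q]))"
    by (simp add: G_def bs_def slot_states_skeleton[OF p(2)] filter_map comp_def)
  have q: "q < 4 * n"
    using pq by simp
  have G: "p + q + 2 \<le> 3 * G + 4" "p + q + 2 \<le> G + 12"
    using good_slots_skeleton[OF n a mstep_Switch[OF j] p(1) q, folded G_eq] by auto
  then have G1: "1 \<le> G" and kG: "k \<le> 3 * G"
    using pq k n by linarith+
  have len: "length bs = p + q + 2"
    by (simp add: bs_def skeleton_def)
  have "(length bs + k - 1) choose k \<le> 4 ^ 12 * card (compositions bs k)"
    by (rule card_compositions_lower_bound[OF G_def G1 kG]) (use G len in simp)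
  moreover have "length bs + k - 1 = 4 * n - 1"
    using len pq by simp
  ultimately show ?thesis
    by (simp only: bs_def)
qed

lemma cond_prob_lower_bound:
  assumes n: "3 \<le> n" and U: "3 \<le> U" and a: "a \<in> mstates n" and j: "j \<in> mstates n"
    and k: "k \<le> 2 * n - 2"
  shows "(1 - 1 / real U) ^ (4 * n) / (4 ^ 12 * real U)
           \<le> mcond_prob U (4 * n - 1) (eventT n a j) (eventL k)"
proof -
  obtain p where p: "p < 2 * n" "cont_walk n a p = j"
    using cont_walk_reaches[OF a j] by blast
  define q where "q = 4 * n - k - p - 2"
  define w where "w = skeleton p q"
  define bs where "bs = map (\<lambda>x. x \<notin> bad_states n) (slot_states n a w)"
  define K where "K = real (card (compositions bs k))"
  define C where "C = real (4 * n - 1 choose k)"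
  define r where "r = 1 - 1 / real U"
  have pq: "p + q + 2 = 4 * n - k"
    using p k n by (simp add: q_def)
  have KC: "C / 4 ^ 12 \<le> K"
    using placements_skeleton[OF n a j k p pq] by (simp add: C_def K_def bs_def w_def field_simps)
  have C: "0 < C"
    using k n by (simp add: C_def)
  have r: "0 \<le> r" "r \<le> 1"
    using U by (auto simp: r_def)
  have "K * ((1/2) ^ k * mweight U w) \<le> mprob U (length w + k) (\<lambda>es. eventT n a j es \<and> eventL k es)"
    unfolding K_def bs_def
    by (rule joint_prob_lower_bound) (use switches_skeleton[OF p(2)] U in \<open>auto simp: w_def skeleton_def\<close>)
  moreover have "length w + k = 4 * n - 1"
    using pq by (simp add: w_def skeleton_def)
  ultimately have joint: "K * ((1/2) ^ k * mweight U w)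
      \<le> mprob U (4 * n - 1) (\<lambda>es. eventT n a j es \<and> eventL k es)"
    by simp
  have "r ^ (4 * n) / (4 ^ 12 * real U) \<le> (C / 4 ^ 12) * r ^ (p + q) / (C * real U)"
    using C U r power_decreasing[of "p + q" "4 * n" r] pq by (simp add: field_simps)
  also have "\<dots> \<le> K * r ^ (p + q) / (C * real U)"
    using KC C U r by (intro divide_right_mono mult_right_mono) auto
  also have "\<dots> = K * ((1/2) ^ k * mweight U w) / (C / 2 ^ (4 * n - 1))"
  proof -
    have "4 * n - 1 = k + (p + q) + 1"
      using pq by simp
    then show ?thesis
      using C U by (simp add: w_def skeleton_def mweight_def medge_prob_def r_def power_add
          power_divide field_simps)
  qed
  also have "\<dots> \<le> mprob U (4 * n - 1) (\<lambda>es. eventT n a j es \<and> eventL k es) / (C / 2 ^ (4 * n - 1))"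
    using joint C by (intro divide_right_mono) auto
  finally show ?thesis
    by (simp add: mcond_prob_def prob_eventL C_def r_def)
qed

text \<open>From ln(1 - x) \<ge> -x - 2x^2; with x = 1/U and N = 4n this bounds the factor
  (1 - 1/U)^(4n) below by exp(-8c) when n \<le> cU.\<close>
lemma one_minus_pow_lower_bound:
  fixes x :: real
  assumes "0 \<le> x" and "x \<le> 1/2"
  shows "exp (- 2 * x * real N) \<le> (1 - x) ^ N"
proof -
  have "x * (2 * x) \<le> x * 1"
    using assms by (intro mult_left_mono) auto
  then have "- 2 * x \<le> - x - 2 * x\<^sup>2"
    by (simp add: power2_eq_square)
  also have "\<dots> \<le> ln (1 - x)"
    using assms by (intro ln_one_minus_pos_lower_bound) auto
  finally have "real N * (- 2 * x) \<le> real N * ln (1 - x)"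
    by (rule mult_left_mono) simp
  then have "exp (- 2 * x * real N) \<le> exp (real N * ln (1 - x))"
    by (simp add: mult.commute)
  also have "\<dots> = (1 - x) ^ N"
    using assms by (simp add: exp_of_nat_mult)
  finally show ?thesis .
qed

theorem lemma9:
  fixes c :: real
  assumes "c \<ge> 1"
  shows "\<exists>c'::real. c' > 0 \<and>
    (\<forall>n U :: nat. n \<ge> 3 \<longrightarrow> U \<ge> 3 \<longrightarrow> real n / c \<le> real U \<longrightarrow> real U \<le> c * real n \<longrightarrow>
      (\<forall>a \<in> mstates n. \<forall>j \<in> mstates n. \<forall>k::nat. k \<le> 2 * n - 2 \<longrightarrow>
         mcond_prob U (4 * n - 1) (eventT n a j) (eventL k) \<ge> 1 / (c' * real n)))"
proof (intro exI[of _ "4 ^ 12 * c * exp (8 * c)"] conjI allI impI ballI)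
  show "0 < 4 ^ 12 * c * exp (8 * c)"
    using assms by simp
next
  fix n U :: nat and a j k
  assume n: "n \<ge> 3" and U: "U \<ge> 3" and lower: "real n / c \<le> real U" and upper: "real U \<le> c * real n"
    and a: "a \<in> mstates n" and j: "j \<in> mstates n" and k: "k \<le> 2 * n - 2"
  have "exp (- 8 * c) \<le> exp (- 2 * (1 / real U) * real (4 * n))"
    using lower assms U by (simp add: field_simps)
  also have "\<dots> \<le> (1 - 1 / real U) ^ (4 * n)"
    using U by (intro one_minus_pow_lower_bound) auto
  finally have pow: "exp (- 8 * c) \<le> (1 - 1 / real U) ^ (4 * n)" .
  have "1 / (4 ^ 12 * c * exp (8 * c) * real n) = exp (- 8 * c) / (4 ^ 12 * (c * real n))"
    by (simp add: exp_minus field_simps)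
  also have "\<dots> \<le> (1 - 1 / real U) ^ (4 * n) / (4 ^ 12 * real U)"
    using pow upper U by (intro frac_le) auto
  also have "\<dots> \<le> mcond_prob U (4 * n - 1) (eventT n a j) (eventL k)"
    by (rule cond_prob_lower_bound[OF n U a j k])
  finally show "1 / (4 ^ 12 * c * exp (8 * c) * real n) \<le> mcond_prob U (4 * n - 1) (eventT n a j) (eventL k)" .
qed

end
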